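(* Let $L$ be a category, $C:L\to\mathbf{Pos}$ an interpretation (resp. a normal interpretation), $\{A(a)\}_{a\in\mathrm{Obj}(L)}$ a family of posets, and $G=\{(\alpha_a:C(a)\to A(a),\ \gamma_a:A(a)\to C(a))\}_{a}$ a family of Galois connections $\alpha_a\dashv\gamma_a$ (resp. Galois insertions). Define $C^G(a)=A(a)$ and, for $f:a\to b$ in $L$, $C^G(f)=\alpha_b\circ C(f)\circ\gamma_a$. Then: (i) $C^G:L\to\mathbf{Pos}$ is an interpretation (resp. a normal interpretation). (ii) $\gamma=\{\gamma_a\}$ is a concretization of interpretation from $C^G$ to $C$; moreover, for every interpretation $A':L\to\mathbf{Pos}$ with $A'(a)=A(a)$ for all $a$, if $\gamma$ is a concretization of interpretation from $A'$ to $C$, then $C^G\le A'$. (iii) $\alpha=\{\alpha_a\}$ is an abstraction of interpretation from $C$ to $C^G$; moreover, for every interpretation $A'$ with $A'(a)=A(a)$ for all $a$, if $\alpha$ is an abstraction of interpretation from $C$ to $A'$, then $C^G\le A'$.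
   Context: $\mathbf{Pos}$ is the category of posets and monotone maps; monotone maps $X\to Y$ are ordered pointwise. An interpretation $F:L\to\mathbf{Pos}$ (oplax functor) consists of a poset $F(a)$ for each object $a$ and a monotone map $F(f):F(a)\to F(b)$ for each morphism $f:a\to b$, such that $F(\mathrm{id}_a)\le\mathrm{id}_{F(a)}$ and $F(g\circ f)\le F(g)\circ F(f)$. It is normal if $F(\mathrm{id}_a)=\mathrm{id}_{F(a)}$. For interpretations $F,G$, $F\le G$ means $F(a)=G(a)$ for all objects $a$ and $F(f)\le G(f)$ for all morphisms $f$. A Galois connection $\alpha\dashv\gamma$ between posets $C$ and $A$ is a pair of monotone maps $\alpha:C\to A$, $\gamma:A\to C$ with $\alpha(c)\le a\iff c\le\gamma(a)$; it is a Galois insertion if moreover $\alpha\circ\gamma=\mathrm{id}$. Given interpretations $A,C$, a family of monotone maps $\gamma_a:A(a)\to C(a)$ is a concretization of interpretation from $A$ to $C$ if $C(f)\circ\gamma_a\le\gamma_b\circ A(f)$ for all $f:a\to b$; a family $\alpha_a:C(a)\to A(a)$ is an abstraction of interpretation from $C$ to $A$ if $\alpha_b\circ C(f)\le A(f)\circ\alpha_a$ for all $f:a\to b$. *)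

theory Defs
  imports Main
begin

record ('o, 'm) category =
  Obj   :: "'o set"
  Arr   :: "'m set"
  dom   :: "'m \<Rightarrow> 'o"
  cod   :: "'m \<Rightarrow> 'o"
  ident :: "'o \<Rightarrow> 'm"
  comp  :: "'m \<Rightarrow> 'm \<Rightarrow> 'm"   (* comp L g f = g \<circ> f *)

definition is_category :: "('o, 'm) category \<Rightarrow> bool" where
  "is_category L \<longleftrightarrow>
     (\<forall>f\<in>Arr L. dom L f \<in> Obj L \<and> cod L f \<in> Obj L) \<and>
     (\<forall>a\<in>Obj L. ident L a \<in> Arr L \<and> dom L (ident L a) = a \<and> cod L (ident L a) = a) \<and>
     (\<forall>f\<in>Arr L. \<forall>g\<in>Arr L. cod L f = dom L g \<longrightarrow>
         comp L g f \<in> Arr L \<and> dom L (comp L g f) = dom L f \<and> cod L (comp L g f) = cod L g) \<and>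
     (\<forall>f\<in>Arr L. comp L f (ident L (dom L f)) = f \<and> comp L (ident L (cod L f)) f = f) \<and>
     (\<forall>f\<in>Arr L. \<forall>g\<in>Arr L. \<forall>h\<in>Arr L. cod L f = dom L g \<longrightarrow> cod L g = dom L h \<longrightarrow>
         comp L h (comp L g f) = comp L (comp L h g) f)"

type_synonym 'e poset = "'e set \<times> ('e \<Rightarrow> 'e \<Rightarrow> bool)"

definition is_poset :: "'e poset \<Rightarrow> bool" where
  "is_poset P \<longleftrightarrow> (let X = fst P; le = snd P in
     (\<forall>x\<in>X. le x x) \<and>
     (\<forall>x\<in>X. \<forall>y\<in>X. le x y \<and> le y x \<longrightarrow> x = y) \<and>
     (\<forall>x\<in>X. \<forall>y\<in>X. \<forall>z\<in>X. le x y \<and> le y z \<longrightarrow> le x z))"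

definition monotone_map :: "'e poset \<Rightarrow> 'f poset \<Rightarrow> ('e \<Rightarrow> 'f) \<Rightarrow> bool" where
  "monotone_map P Q h \<longleftrightarrow>
     (\<forall>x\<in>fst P. h x \<in> fst Q) \<and>
     (\<forall>x\<in>fst P. \<forall>y\<in>fst P. snd P x y \<longrightarrow> snd Q (h x) (h y))"

definition map_le :: "'e poset \<Rightarrow> 'f poset \<Rightarrow> ('e \<Rightarrow> 'f) \<Rightarrow> ('e \<Rightarrow> 'f) \<Rightarrow> bool" where
  "map_le P Q h k \<longleftrightarrow> (\<forall>x\<in>fst P. snd Q (h x) (k x))"

definition interpretation_of ::
  "('o, 'm) category \<Rightarrow> ('o \<Rightarrow> 'e poset) \<Rightarrow> ('m \<Rightarrow> 'e \<Rightarrow> 'e) \<Rightarrow> bool" where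
  "interpretation_of L FO FM \<longleftrightarrow>
     (\<forall>a\<in>Obj L. is_poset (FO a)) \<and>
     (\<forall>f\<in>Arr L. monotone_map (FO (dom L f)) (FO (cod L f)) (FM f)) \<and>
     (\<forall>a\<in>Obj L. map_le (FO a) (FO a) (FM (ident L a)) id) \<and>
     (\<forall>f\<in>Arr L. \<forall>g\<in>Arr L. cod L f = dom L g \<longrightarrow>
        map_le (FO (dom L f)) (FO (cod L g)) (FM (comp L g f)) (FM g \<circ> FM f))"

definition normal_interpretation ::
  "('o, 'm) category \<Rightarrow> ('o \<Rightarrow> 'e poset) \<Rightarrow> ('m \<Rightarrow> 'e \<Rightarrow> 'e) \<Rightarrow> bool" where
  "normal_interpretation L FO FM \<longleftrightarrow>
     interpretation_of L FO FM \<and>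
     (\<forall>a\<in>Obj L. \<forall>x\<in>fst (FO a). FM (ident L a) x = x)"

definition interp_le ::
  "('o, 'm) category \<Rightarrow> ('o \<Rightarrow> 'e poset) \<Rightarrow> ('m \<Rightarrow> 'e \<Rightarrow> 'e)
     \<Rightarrow> ('o \<Rightarrow> 'e poset) \<Rightarrow> ('m \<Rightarrow> 'e \<Rightarrow> 'e) \<Rightarrow> bool" where
  "interp_le L FO FM GO GM \<longleftrightarrow>
     (\<forall>a\<in>Obj L. FO a = GO a) \<and>
     (\<forall>f\<in>Arr L. map_le (FO (dom L f)) (FO (cod L f)) (FM f) (GM f))"

definition galois_connection ::
  "'c poset \<Rightarrow> 'a poset \<Rightarrow> ('c \<Rightarrow> 'a) \<Rightarrow> ('a \<Rightarrow> 'c) \<Rightarrow> bool" where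
  "galois_connection C A \<alpha> \<gamma> \<longleftrightarrow>
     monotone_map C A \<alpha> \<and> monotone_map A C \<gamma> \<and>
     (\<forall>c\<in>fst C. \<forall>a\<in>fst A. snd A (\<alpha> c) a \<longleftrightarrow> snd C c (\<gamma> a))"

definition galois_insertion ::
  "'c poset \<Rightarrow> 'a poset \<Rightarrow> ('c \<Rightarrow> 'a) \<Rightarrow> ('a \<Rightarrow> 'c) \<Rightarrow> bool" where
  "galois_insertion C A \<alpha> \<gamma> \<longleftrightarrow>
     galois_connection C A \<alpha> \<gamma> \<and> (\<forall>a\<in>fst A. \<alpha> (\<gamma> a) = a)"

definition concretization ::
  "('o, 'm) category \<Rightarrow> ('o \<Rightarrow> 'a poset) \<Rightarrow> ('m \<Rightarrow> 'a \<Rightarrow> 'a)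
     \<Rightarrow> ('o \<Rightarrow> 'c poset) \<Rightarrow> ('m \<Rightarrow> 'c \<Rightarrow> 'c) \<Rightarrow> ('o \<Rightarrow> 'a \<Rightarrow> 'c) \<Rightarrow> bool" where
  "concretization L AO AM CO CM \<gamma> \<longleftrightarrow>
     (\<forall>a\<in>Obj L. monotone_map (AO a) (CO a) (\<gamma> a)) \<and>
     (\<forall>f\<in>Arr L. map_le (AO (dom L f)) (CO (cod L f))
                   (CM f \<circ> \<gamma> (dom L f)) (\<gamma> (cod L f) \<circ> AM f))"

definition abstraction ::
  "('o, 'm) category \<Rightarrow> ('o \<Rightarrow> 'c poset) \<Rightarrow> ('m \<Rightarrow> 'c \<Rightarrow> 'c)
     \<Rightarrow> ('o \<Rightarrow> 'a poset) \<Rightarrow> ('m \<Rightarrow> 'a \<Rightarrow> 'a) \<Rightarrow> ('o \<Rightarrow> 'c \<Rightarrow> 'a) \<Rightarrow> bool" where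
  "abstraction L CO CM AO AM \<alpha> \<longleftrightarrow>
     (\<forall>a\<in>Obj L. monotone_map (CO a) (AO a) (\<alpha> a)) \<and>
     (\<forall>f\<in>Arr L. map_le (CO (dom L f)) (AO (cod L f))
                   (\<alpha> (cod L f) \<circ> CM f) (AM f \<circ> \<alpha> (dom L f)))"

definition induced_morph ::
  "('o, 'm) category \<Rightarrow> ('m \<Rightarrow> 'c \<Rightarrow> 'c) \<Rightarrow> ('o \<Rightarrow> 'c \<Rightarrow> 'a) \<Rightarrow> ('o \<Rightarrow> 'a \<Rightarrow> 'c)
     \<Rightarrow> 'm \<Rightarrow> 'a \<Rightarrow> 'a" where
  "induced_morph L CM \<alpha> \<gamma> f = \<alpha> (cod L f) \<circ> CM f \<circ> \<gamma> (dom L f)"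

end

theory Submission
  imports Defs
begin

text \<open>Everything happens one arrow at a time: for f : a \<rightarrow> b the induced map is the
  transport \<alpha> b \<circ> C(f) \<circ> \<gamma> a of C(f) along two Galois connections. The unit c \<le> \<gamma> (\<alpha> c)
  and counit \<alpha> (\<gamma> x) \<le> x give the oplax laws and the two simulation inequalities, and the
  adjunction \<alpha> c \<le> x \<longleftrightarrow> c \<le> \<gamma> x shows that the transport lies below every interpretation
  for which \<gamma> is a concretization or \<alpha> an abstraction.\<close>

lemma is_poset_refl: "is_poset P \<Longrightarrow> x \<in> fst P \<Longrightarrow> snd P x x"
  unfolding is_poset_def Let_def by blast

lemma is_poset_trans:
  "is_poset P \<Longrightarrow> x \<in> fst P \<Longrightarrow> y \<in> fst P \<Longrightarrow> z \<in> fst P \<Longrightarrow> snd P x y \<Longrightarrow> snd P y z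
    \<Longrightarrow> snd P x z"
  unfolding is_poset_def Let_def by blast

lemma monotone_map_in: "monotone_map P Q h \<Longrightarrow> x \<in> fst P \<Longrightarrow> h x \<in> fst Q"
  unfolding monotone_map_def by blast

lemma monotone_map_mono:
  "monotone_map P Q h \<Longrightarrow> x \<in> fst P \<Longrightarrow> y \<in> fst P \<Longrightarrow> snd P x y \<Longrightarrow> snd Q (h x) (h y)"
  unfolding monotone_map_def by blast

lemma monotone_map_comp: "monotone_map P Q h \<Longrightarrow> monotone_map Q R k \<Longrightarrow> monotone_map P R (k \<circ> h)"
  unfolding monotone_map_def by simp

lemma galois_connection_monotone_abs: "galois_connection C A \<alpha> \<gamma> \<Longrightarrow> monotone_map C A \<alpha>"
  and galois_connection_monotone_conc: "galois_connection C A \<alpha> \<gamma> \<Longrightarrow> monotone_map A C \<gamma>"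
  unfolding galois_connection_def by blast+

lemma galois_connection_abs_in: "galois_connection C A \<alpha> \<gamma> \<Longrightarrow> c \<in> fst C \<Longrightarrow> \<alpha> c \<in> fst A"
  and galois_connection_conc_in: "galois_connection C A \<alpha> \<gamma> \<Longrightarrow> x \<in> fst A \<Longrightarrow> \<gamma> x \<in> fst C"
  unfolding galois_connection_def monotone_map_def by blast+

lemma galois_connection_adjoint:
  "galois_connection C A \<alpha> \<gamma> \<Longrightarrow> c \<in> fst C \<Longrightarrow> x \<in> fst A \<Longrightarrow> snd A (\<alpha> c) x \<longleftrightarrow> snd C c (\<gamma> x)"
  unfolding galois_connection_def by blast

lemma galois_connection_unit:
  assumes "galois_connection C A \<alpha> \<gamma>" "is_poset A" "c \<in> fst C"
  shows "snd C c (\<gamma> (\<alpha> c))"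
  using assms galois_connection_adjoint is_poset_refl galois_connection_abs_in by metis

lemma galois_connection_counit:
  assumes "galois_connection C A \<alpha> \<gamma>" "is_poset C" "x \<in> fst A"
  shows "snd A (\<alpha> (\<gamma> x)) x"
  using assms galois_connection_adjoint is_poset_refl galois_connection_conc_in by metis

context
  fixes C A C' A' :: "_ poset" and \<alpha> \<gamma> \<alpha>' \<gamma>'
  assumes G: "galois_connection C A \<alpha> \<gamma>" and G': "galois_connection C' A' \<alpha>' \<gamma>'"
begin

lemma monotone_map_transport:
  "monotone_map C C' h \<Longrightarrow> monotone_map A A' (\<alpha>' \<circ> h \<circ> \<gamma>)"
  using monotone_map_comp galois_connection_monotone_abs[OF G'] galois_connection_monotone_conc[OF G]
  by metis

lemma map_le_transport_conc:
  assumes "is_poset A'" "monotone_map C C' h"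
  shows "map_le A C' (h \<circ> \<gamma>) (\<gamma>' \<circ> (\<alpha>' \<circ> h \<circ> \<gamma>))"
  unfolding map_le_def
  using galois_connection_unit[OF G' assms(1)] monotone_map_in[OF assms(2)]
    galois_connection_conc_in[OF G]
  by simp

lemma map_le_transport_abs:
  assumes "is_poset A" "monotone_map C C' h"
  shows "map_le C A' (\<alpha>' \<circ> h) ((\<alpha>' \<circ> h \<circ> \<gamma>) \<circ> \<alpha>)"
  unfolding map_le_def
proof
  fix c assume c: "c \<in> fst C"
  have \<gamma>\<alpha>c: "\<gamma> (\<alpha> c) \<in> fst C"
    using c galois_connection_abs_in[OF G] galois_connection_conc_in[OF G] by blast
  have "snd C' (h c) (h (\<gamma> (\<alpha> c)))"
    using monotone_map_mono[OF assms(2) c \<gamma>\<alpha>c] galois_connection_unit[OF G assms(1) c] .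
  then show "snd A' ((\<alpha>' \<circ> h) c) ((\<alpha>' \<circ> h \<circ> \<gamma> \<circ> \<alpha>) c)"
    using monotone_map_mono[OF galois_connection_monotone_abs[OF G']] monotone_map_in[OF assms(2)]
      c \<gamma>\<alpha>c by simp
qed

lemma transport_le_of_conc:
  assumes "monotone_map C C' h" "\<forall>x\<in>fst A. k x \<in> fst A'"
    and "map_le A C' (h \<circ> \<gamma>) (\<gamma>' \<circ> k)"
  shows "map_le A A' (\<alpha>' \<circ> h \<circ> \<gamma>) k"
  using assms(2,3) galois_connection_adjoint[OF G'] monotone_map_in[OF assms(1)]
    galois_connection_conc_in[OF G]
  unfolding map_le_def by simp

lemma transport_le_of_abs:
  assumes "is_poset C" "is_poset A'" "monotone_map C C' h" "monotone_map A A' k"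
    and "map_le C A' (\<alpha>' \<circ> h) (k \<circ> \<alpha>)"
  shows "map_le A A' (\<alpha>' \<circ> h \<circ> \<gamma>) k"
  unfolding map_le_def
proof
  fix x assume x: "x \<in> fst A"
  have \<gamma>x: "\<gamma> x \<in> fst C"
    using galois_connection_conc_in[OF G x] .
  have \<alpha>\<gamma>x: "\<alpha> (\<gamma> x) \<in> fst A"
    using galois_connection_abs_in[OF G \<gamma>x] .
  have "snd A' (\<alpha>' (h (\<gamma> x))) (k (\<alpha> (\<gamma> x)))"
    using assms(5) \<gamma>x unfolding map_le_def by simp
  moreover have "snd A' (k (\<alpha> (\<gamma> x))) (k x)"
    using monotone_map_mono[OF assms(4) \<alpha>\<gamma>x x] galois_connection_counit[OF G assms(1) x] .
  moreover have "(\<alpha>' \<circ> h \<circ> \<gamma>) x \<in> fst A'"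
    using monotone_map_in[OF monotone_map_transport[OF assms(3)] x] .
  ultimately show "snd A' ((\<alpha>' \<circ> h \<circ> \<gamma>) x) (k x)"
    using is_poset_trans[OF assms(2)] monotone_map_in[OF assms(4)] \<alpha>\<gamma>x x by (simp, blast)
qed

end

lemma transport_ident_le:
  assumes G: "galois_connection C A \<alpha> \<gamma>" and "is_poset C" "is_poset A"
    and "monotone_map C C h" "map_le C C h id"
  shows "map_le A A (\<alpha> \<circ> h \<circ> \<gamma>) id"
  unfolding map_le_def
proof
  fix x assume x: "x \<in> fst A"
  have \<gamma>x: "\<gamma> x \<in> fst C"
    using galois_connection_conc_in[OF G x] .
  have "snd A (\<alpha> (h (\<gamma> x))) (\<alpha> (\<gamma> x))"
    using assms(5) \<gamma>x monotone_map_mono[OF galois_connection_monotone_abs[OF G]]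
      monotone_map_in[OF assms(4)] unfolding map_le_def by simp
  moreover have "snd A (\<alpha> (\<gamma> x)) x"
    using galois_connection_counit[OF G assms(2) x] .
  ultimately show "snd A ((\<alpha> \<circ> h \<circ> \<gamma>) x) (id x)"
    using is_poset_trans[OF assms(3)] galois_connection_abs_in[OF G] monotone_map_in[OF assms(4)]
      \<gamma>x x by (simp, blast)
qed

text \<open>The unit inserted between the two factors is what makes the transport only oplax.\<close>
lemma transport_comp_le:
  assumes G\<^sub>1: "galois_connection C\<^sub>1 A\<^sub>1 \<alpha>\<^sub>1 \<gamma>\<^sub>1"
    and G\<^sub>2: "galois_connection C\<^sub>2 A\<^sub>2 \<alpha>\<^sub>2 \<gamma>\<^sub>2"
    and G\<^sub>3: "galois_connection C\<^sub>3 A\<^sub>3 \<alpha>\<^sub>3 \<gamma>\<^sub>3"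
    and "is_poset A\<^sub>2" "is_poset C\<^sub>3"
    and h\<^sub>1: "monotone_map C\<^sub>1 C\<^sub>2 h\<^sub>1" and h\<^sub>2: "monotone_map C\<^sub>2 C\<^sub>3 h\<^sub>2"
    and h\<^sub>3: "monotone_map C\<^sub>1 C\<^sub>3 h\<^sub>3"
    and oplax: "map_le C\<^sub>1 C\<^sub>3 h\<^sub>3 (h\<^sub>2 \<circ> h\<^sub>1)"
  shows "map_le A\<^sub>1 A\<^sub>3 (\<alpha>\<^sub>3 \<circ> h\<^sub>3 \<circ> \<gamma>\<^sub>1) ((\<alpha>\<^sub>3 \<circ> h\<^sub>2 \<circ> \<gamma>\<^sub>2) \<circ> (\<alpha>\<^sub>2 \<circ> h\<^sub>1 \<circ> \<gamma>\<^sub>1))"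
  unfolding map_le_def
proof
  fix x assume x: "x \<in> fst A\<^sub>1"
  define u where "u = \<gamma>\<^sub>1 x"
  define v where "v = h\<^sub>1 u"
  have u: "u \<in> fst C\<^sub>1"
    unfolding u_def using galois_connection_conc_in[OF G\<^sub>1 x] .
  have v: "v \<in> fst C\<^sub>2"
    unfolding v_def using monotone_map_in[OF h\<^sub>1 u] .
  have \<gamma>\<alpha>v: "\<gamma>\<^sub>2 (\<alpha>\<^sub>2 v) \<in> fst C\<^sub>2"
    using galois_connection_conc_in[OF G\<^sub>2 galois_connection_abs_in[OF G\<^sub>2 v]] .
  have "snd C\<^sub>3 (h\<^sub>3 u) (h\<^sub>2 v)"
    using oplax u unfolding map_le_def v_def by simp
  moreover have "snd C\<^sub>3 (h\<^sub>2 v) (h\<^sub>2 (\<gamma>\<^sub>2 (\<alpha>\<^sub>2 v)))"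
    using monotone_map_mono[OF h\<^sub>2 v \<gamma>\<alpha>v] galois_connection_unit[OF G\<^sub>2 assms(4) v] .
  ultimately have "snd C\<^sub>3 (h\<^sub>3 u) (h\<^sub>2 (\<gamma>\<^sub>2 (\<alpha>\<^sub>2 v)))"
    using is_poset_trans[OF assms(5)] monotone_map_in[OF h\<^sub>3 u] monotone_map_in[OF h\<^sub>2]
      v \<gamma>\<alpha>v by blast
  then have "snd A\<^sub>3 (\<alpha>\<^sub>3 (h\<^sub>3 u)) (\<alpha>\<^sub>3 (h\<^sub>2 (\<gamma>\<^sub>2 (\<alpha>\<^sub>2 v))))"
    using monotone_map_mono[OF galois_connection_monotone_abs[OF G\<^sub>3]]
      monotone_map_in[OF h\<^sub>3 u] monotone_map_in[OF h\<^sub>2 \<gamma>\<alpha>v] by blast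
  then show "snd A\<^sub>3 ((\<alpha>\<^sub>3 \<circ> h\<^sub>3 \<circ> \<gamma>\<^sub>1) x) ((\<alpha>\<^sub>3 \<circ> h\<^sub>2 \<circ> \<gamma>\<^sub>2 \<circ> (\<alpha>\<^sub>2 \<circ> h\<^sub>1 \<circ> \<gamma>\<^sub>1)) x)"
    unfolding u_def v_def by simp
qed

lemma category_dom_in: "is_category L \<Longrightarrow> f \<in> Arr L \<Longrightarrow> dom L f \<in> Obj L"
  and category_cod_in: "is_category L \<Longrightarrow> f \<in> Arr L \<Longrightarrow> cod L f \<in> Obj L"
  unfolding is_category_def by blast+

lemma category_ident:
  "is_category L \<Longrightarrow> a \<in> Obj L
    \<Longrightarrow> ident L a \<in> Arr L \<and> dom L (ident L a) = a \<and> cod L (ident L a) = a"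
  unfolding is_category_def by blast

lemma category_comp:
  "is_category L \<Longrightarrow> f \<in> Arr L \<Longrightarrow> g \<in> Arr L \<Longrightarrow> cod L f = dom L g
    \<Longrightarrow> comp L g f \<in> Arr L \<and> dom L (comp L g f) = dom L f \<and> cod L (comp L g f) = cod L g"
  unfolding is_category_def by blast

context
  fixes L :: "('o, 'm) category"
    and CO :: "'o \<Rightarrow> 'c poset" and CM :: "'m \<Rightarrow> 'c \<Rightarrow> 'c"
    and AO :: "'o \<Rightarrow> 'a poset"
    and \<alpha> :: "'o \<Rightarrow> 'c \<Rightarrow> 'a" and \<gamma> :: "'o \<Rightarrow> 'a \<Rightarrow> 'c"
  assumes L: "is_category L"
    and C: "interpretation_of L CO CM"
    and A: "\<forall>a\<in>Obj L. is_poset (AO a)"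
    and G: "\<forall>a\<in>Obj L. galois_connection (CO a) (AO a) (\<alpha> a) (\<gamma> a)"
begin

private lemma C_poset: "a \<in> Obj L \<Longrightarrow> is_poset (CO a)"
  and C_monotone: "f \<in> Arr L \<Longrightarrow> monotone_map (CO (dom L f)) (CO (cod L f)) (CM f)"
  using C unfolding interpretation_of_def by blast+

private lemma G_dom:
    "f \<in> Arr L \<Longrightarrow> galois_connection (CO (dom L f)) (AO (dom L f)) (\<alpha> (dom L f)) (\<gamma> (dom L f))"
  and G_cod:
    "f \<in> Arr L \<Longrightarrow> galois_connection (CO (cod L f)) (AO (cod L f)) (\<alpha> (cod L f)) (\<gamma> (cod L f))"
  using G category_dom_in[OF L] category_cod_in[OF L] by blast+

lemma interpretation_of_induced_morph: "interpretation_of L AO (induced_morph L CM \<alpha> \<gamma>)"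
  unfolding interpretation_of_def induced_morph_def
proof (intro conjI ballI impI)
  fix f assume f: "f \<in> Arr L"
  show "monotone_map (AO (dom L f)) (AO (cod L f)) (\<alpha> (cod L f) \<circ> CM f \<circ> \<gamma> (dom L f))"
    using monotone_map_transport[OF G_dom[OF f] G_cod[OF f] C_monotone[OF f]] .
next
  fix a assume a: "a \<in> Obj L"
  have i: "ident L a \<in> Arr L" "dom L (ident L a) = a" "cod L (ident L a) = a"
    using category_ident[OF L a] by auto
  have "map_le (CO a) (CO a) (CM (ident L a)) id"
    using C a unfolding interpretation_of_def by blast
  then show "map_le (AO a) (AO a) (\<alpha> (cod L (ident L a)) \<circ> CM (ident L a) \<circ> \<gamma> (dom L (ident L a))) id"
    using transport_ident_le G C_poset A C_monotone[OF i(1)] a unfolding i by blast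
next
  fix f g assume f: "f \<in> Arr L" and g: "g \<in> Arr L" and fg: "cod L f = dom L g"
  have gf: "comp L g f \<in> Arr L" "dom L (comp L g f) = dom L f" "cod L (comp L g f) = cod L g"
    using category_comp[OF L f g fg] by auto
  have "map_le (CO (dom L f)) (CO (cod L g)) (CM (comp L g f)) (CM g \<circ> CM f)"
    using C f g fg unfolding interpretation_of_def by blast
  moreover note transport_comp_le[OF G_dom[OF f] G_cod[OF f] G_cod[OF g]
      A[rule_format, OF category_cod_in[OF L f]] C_poset[OF category_cod_in[OF L g]]
      C_monotone[OF f]]
  ultimately show "map_le (AO (dom L f)) (AO (cod L g))
      (\<alpha> (cod L (comp L g f)) \<circ> CM (comp L g f) \<circ> \<gamma> (dom L (comp L g f)))
      ((\<alpha> (cod L g) \<circ> CM g \<circ> \<gamma> (dom L g)) \<circ> (\<alpha> (cod L f) \<circ> CM f \<circ> \<gamma> (dom L f)))"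
    using C_monotone[OF g] C_monotone[OF gf(1)] unfolding gf fg by simp
qed (use A in blast)

lemma normal_interpretation_induced_morph:
  assumes normal: "normal_interpretation L CO CM"
    and insertion: "\<forall>a\<in>Obj L. galois_insertion (CO a) (AO a) (\<alpha> a) (\<gamma> a)"
  shows "normal_interpretation L AO (induced_morph L CM \<alpha> \<gamma>)"
  unfolding normal_interpretation_def
proof (intro conjI ballI interpretation_of_induced_morph)
  fix a x assume a: "a \<in> Obj L" and x: "x \<in> fst (AO a)"
  have i: "dom L (ident L a) = a" "cod L (ident L a) = a"
    using category_ident[OF L a] by auto
  have "\<gamma> a x \<in> fst (CO a)"
    using galois_connection_conc_in[OF G[rule_format, OF a] x] .
  then have "CM (ident L a) (\<gamma> a x) = \<gamma> a x"
    using normal a unfolding normal_interpretation_def by blast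
  moreover have "\<alpha> a (\<gamma> a x) = x"
    using insertion a x unfolding galois_insertion_def by blast
  ultimately show "induced_morph L CM \<alpha> \<gamma> (ident L a) x = x"
    unfolding induced_morph_def i by simp
qed

lemma concretization_induced_morph: "concretization L AO (induced_morph L CM \<alpha> \<gamma>) CO CM \<gamma>"
  unfolding concretization_def induced_morph_def
proof (intro conjI ballI)
  fix f assume f: "f \<in> Arr L"
  show "map_le (AO (dom L f)) (CO (cod L f)) (CM f \<circ> \<gamma> (dom L f))
      (\<gamma> (cod L f) \<circ> (\<alpha> (cod L f) \<circ> CM f \<circ> \<gamma> (dom L f)))"
    using map_le_transport_conc[OF G_dom[OF f] G_cod[OF f] A[rule_format, OF category_cod_in[OF L f]]
        C_monotone[OF f]] .
next
  fix a assume "a \<in> Obj L"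
  then show "monotone_map (AO a) (CO a) (\<gamma> a)"
    using galois_connection_monotone_conc G by blast
qed

lemma induced_morph_le_of_concretization:
  assumes A': "interpretation_of L A'O A'M" and objects: "\<forall>a\<in>Obj L. A'O a = AO a"
    and conc: "concretization L A'O A'M CO CM \<gamma>"
  shows "interp_le L AO (induced_morph L CM \<alpha> \<gamma>) A'O A'M"
  unfolding interp_le_def
proof (intro conjI ballI)
  fix f assume f: "f \<in> Arr L"
  have objects_f: "A'O (dom L f) = AO (dom L f)" "A'O (cod L f) = AO (cod L f)"
    using objects category_dom_in[OF L f] category_cod_in[OF L f] by auto
  have "monotone_map (AO (dom L f)) (AO (cod L f)) (A'M f)"
    using A' f unfolding interpretation_of_def objects_f[symmetric] by blast
  moreover have "map_le (AO (dom L f)) (CO (cod L f)) (CM f \<circ> \<gamma> (dom L f)) (\<gamma> (cod L f) \<circ> A'M f)"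
    using conc f unfolding concretization_def objects_f[symmetric] by blast
  ultimately show "map_le (AO (dom L f)) (AO (cod L f)) (induced_morph L CM \<alpha> \<gamma> f) (A'M f)"
    unfolding induced_morph_def
    using transport_le_of_conc[OF G_dom[OF f] G_cod[OF f] C_monotone[OF f]]
      monotone_map_in[of "AO (dom L f)" "AO (cod L f)" "A'M f"]
    by blast
qed (use objects in simp)

lemma abstraction_induced_morph: "abstraction L CO CM AO (induced_morph L CM \<alpha> \<gamma>) \<alpha>"
  unfolding abstraction_def induced_morph_def
proof (intro conjI ballI)
  fix f assume f: "f \<in> Arr L"
  show "map_le (CO (dom L f)) (AO (cod L f)) (\<alpha> (cod L f) \<circ> CM f)
      ((\<alpha> (cod L f) \<circ> CM f \<circ> \<gamma> (dom L f)) \<circ> \<alpha> (dom L f))"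
    using map_le_transport_abs[OF G_dom[OF f] G_cod[OF f] A[rule_format, OF category_dom_in[OF L f]]
        C_monotone[OF f]] .
next
  fix a assume "a \<in> Obj L"
  then show "monotone_map (CO a) (AO a) (\<alpha> a)"
    using galois_connection_monotone_abs G by blast
qed

lemma induced_morph_le_of_abstraction:
  assumes A': "interpretation_of L A'O A'M" and objects: "\<forall>a\<in>Obj L. A'O a = AO a"
    and abs: "abstraction L CO CM A'O A'M \<alpha>"
  shows "interp_le L AO (induced_morph L CM \<alpha> \<gamma>) A'O A'M"
  unfolding interp_le_def
proof (intro conjI ballI)
  fix f assume f: "f \<in> Arr L"
  have objects_f: "A'O (dom L f) = AO (dom L f)" "A'O (cod L f) = AO (cod L f)"
    using objects category_dom_in[OF L f] category_cod_in[OF L f] by auto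
  have "monotone_map (AO (dom L f)) (AO (cod L f)) (A'M f)"
    using A' f unfolding interpretation_of_def objects_f[symmetric] by blast
  moreover have "map_le (CO (dom L f)) (AO (cod L f)) (\<alpha> (cod L f) \<circ> CM f) (A'M f \<circ> \<alpha> (dom L f))"
    using abs f unfolding abstraction_def objects_f[symmetric] by blast
  ultimately show "map_le (AO (dom L f)) (AO (cod L f)) (induced_morph L CM \<alpha> \<gamma> f) (A'M f)"
    unfolding induced_morph_def
    using transport_le_of_abs[OF G_dom[OF f] G_cod[OF f] C_poset[OF category_dom_in[OF L f]]
      A[rule_format, OF category_cod_in[OF L f]] C_monotone[OF f]]
    by blast
qed (use objects in simp)

end

theorem mainTheorem5:
  fixes L :: "('o, 'm) category"
    and CO :: "'o \<Rightarrow> 'c poset" and CM :: "'m \<Rightarrow> 'c \<Rightarrow> 'c"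
    and AO :: "'o \<Rightarrow> 'a poset"
    and \<alpha> :: "'o \<Rightarrow> 'c \<Rightarrow> 'a" and \<gamma> :: "'o \<Rightarrow> 'a \<Rightarrow> 'c"
  assumes L: "is_category L"
    and C: "interpretation_of L CO CM"
    and A: "\<forall>a\<in>Obj L. is_poset (AO a)"
    and G: "\<forall>a\<in>Obj L. galois_connection (CO a) (AO a) (\<alpha> a) (\<gamma> a)"
  shows
    "interpretation_of L AO (induced_morph L CM \<alpha> \<gamma>)
     \<and> ((normal_interpretation L CO CM \<and>
          (\<forall>a\<in>Obj L. galois_insertion (CO a) (AO a) (\<alpha> a) (\<gamma> a)))
         \<longrightarrow> normal_interpretation L AO (induced_morph L CM \<alpha> \<gamma>))
     \<and> concretization L AO (induced_morph L CM \<alpha> \<gamma>) CO CM \<gamma>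
     \<and> (\<forall>A'O A'M. interpretation_of L A'O A'M \<longrightarrow> (\<forall>a\<in>Obj L. A'O a = AO a) \<longrightarrow>
          concretization L A'O A'M CO CM \<gamma> \<longrightarrow>
          interp_le L AO (induced_morph L CM \<alpha> \<gamma>) A'O A'M)
     \<and> abstraction L CO CM AO (induced_morph L CM \<alpha> \<gamma>) \<alpha>
     \<and> (\<forall>A'O A'M. interpretation_of L A'O A'M \<longrightarrow> (\<forall>a\<in>Obj L. A'O a = AO a) \<longrightarrow>
          abstraction L CO CM A'O A'M \<alpha> \<longrightarrow>
          interp_le L AO (induced_morph L CM \<alpha> \<gamma>) A'O A'M)"
  using interpretation_of_induced_morph[OF L C A G]
    normal_interpretation_induced_morph[OF L C A G]
    concretization_induced_morph[OF L C A G]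
    induced_morph_le_of_concretization[OF L C A G]
    abstraction_induced_morph[OF L C A G]
    induced_morph_le_of_abstraction[OF L C A G]
  by blast

end
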